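(* Let $\mathbf{k}$ be an algebraically closed field of characteristic zero, $\mathcal{A}=\mathbf{k}[x_1,\ldots,x_n]$, $\mathcal{V}=\bigoplus_{i=1}^n\mathcal{A}\frac{\partial}{\partial x_i}$, $\mathcal{L}_+\subset\mathcal{V}$ the subalgebra of vector fields vanishing at the origin, and $\mathcal{D}$ the Weyl algebra. The map $\psi:\mathcal{D}\otimes U(\mathcal{L}_+)\to\mathcal{A}\# U(\mathcal{V})$ defined by $$\psi\left(x^r\partial^s\right)=x^r\#\left(\frac{\partial}{\partial x_1}\right)^{s_1}\cdots\left(\frac{\partial}{\partial x_n}\right)^{s_n}\ \text{on }\mathcal{D},\qquad \psi\left(x^m\frac{\partial}{\partial x_p}\right)=\sum_{0\leq k\leq m}(-1)^{m-k}\binom{m}{k}x^{m-k}\# x^k\frac{\partial}{\partial x_p}\ \text{on }\mathcal{L}_+\ (m\ne0),$$ extends to a (well-defined) homomorphism of associative algebras.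
   Context: Multi-index notation: $x^r=x_1^{r_1}\cdots x_n^{r_n}$, $\partial^s=(\partial/\partial x_1)^{s_1}\cdots(\partial/\partial x_n)^{s_n}$; $k\le m$ componentwise; $\binom{m}{k}=\prod_i\binom{m_i}{k_i}$; $(-1)^{s}=(-1)^{s_1+\cdots+s_n}$. $\mathcal{L}_+$ is spanned by $x^m\frac{\partial}{\partial x_p}$ with $m\ne 0$. The smash product $\mathcal{A}\# U(\mathcal{V})$ is $\mathcal{A}\otimes U(\mathcal{V})$ with product $(f\# u)(g\# v)=\sum_i f\,u_i^{(1)}(g)\# u_i^{(2)}v$ where $\Delta(u)=\sum_i u_i^{(1)}\otimes u_i^{(2)}$ is the coproduct; in particular $(1\#\eta)(f\#1)=f\#\eta+\eta(f)\#1$ for $\eta\in\mathcal{V}$, $f\in\mathcal{A}$. *)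

theory Defs
  imports "HOL-Computational_Algebra.Polynomial"
begin

text \<open>Terms of the free associative unital k-algebra on generators of type 'g.\<close>
datatype ('k, 'g) aterm =
    Gen 'g
  | Scal 'k
  | Add "('k, 'g) aterm" "('k, 'g) aterm"
  | Mul "('k, 'g) aterm" "('k, 'g) aterm"

definition Neg :: "('k::field, 'g) aterm \<Rightarrow> ('k, 'g) aterm" where
  "Neg t = Mul (Scal (-1)) t"

definition Sub :: "('k::field, 'g) aterm \<Rightarrow> ('k, 'g) aterm \<Rightarrow> ('k, 'g) aterm" where
  "Sub s t = Add s (Neg t)"

definition comm :: "('k::field, 'g) aterm \<Rightarrow> ('k, 'g) aterm \<Rightarrow> ('k, 'g) aterm" where
  "comm s t = Sub (Mul s t) (Mul t s)"

text \<open>Equality in the algebra presented by generators and the relations R: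
  the congruence generated by the axioms of a unital associative k-algebra and R.\<close>
inductive alg_eq :: "(('k::field, 'g) aterm \<times> ('k, 'g) aterm) set
    \<Rightarrow> ('k, 'g) aterm \<Rightarrow> ('k, 'g) aterm \<Rightarrow> bool" for R where
  rel: "(s, t) \<in> R \<Longrightarrow> alg_eq R s t"
| refl: "alg_eq R t t"
| sym: "alg_eq R s t \<Longrightarrow> alg_eq R t s"
| trans: "alg_eq R s t \<Longrightarrow> alg_eq R t u \<Longrightarrow> alg_eq R s u"
| add_cong: "alg_eq R s s' \<Longrightarrow> alg_eq R t t' \<Longrightarrow> alg_eq R (Add s t) (Add s' t')"
| mul_cong: "alg_eq R s s' \<Longrightarrow> alg_eq R t t' \<Longrightarrow> alg_eq R (Mul s t) (Mul s' t')"
| add_assoc: "alg_eq R (Add (Add a b) c) (Add a (Add b c))"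
| add_comm: "alg_eq R (Add a b) (Add b a)"
| add_zero: "alg_eq R (Add (Scal 0) a) a"
| add_neg: "alg_eq R (Add a (Neg a)) (Scal 0)"
| mul_assoc: "alg_eq R (Mul (Mul a b) c) (Mul a (Mul b c))"
| mul_one_l: "alg_eq R (Mul (Scal 1) a) a"
| mul_one_r: "alg_eq R (Mul a (Scal 1)) a"
| distrib_l: "alg_eq R (Mul a (Add b c)) (Add (Mul a b) (Mul a c))"
| distrib_r: "alg_eq R (Mul (Add a b) c) (Add (Mul a c) (Mul b c))"
| scal_add: "alg_eq R (Add (Scal x) (Scal y)) (Scal (x + y))"
| scal_mul: "alg_eq R (Mul (Scal x) (Scal y)) (Scal (x * y))"
| scal_central: "alg_eq R (Mul (Scal x) a) (Mul a (Scal x))"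

text \<open>Substitution of generators = the induced homomorphism of free algebras.\<close>
primrec tsubst :: "('g \<Rightarrow> ('k, 'h) aterm) \<Rightarrow> ('k, 'g) aterm \<Rightarrow> ('k, 'h) aterm" where
  "tsubst \<phi> (Gen g) = \<phi> g"
| "tsubst \<phi> (Scal c) = Scal c"
| "tsubst \<phi> (Add s t) = Add (tsubst \<phi> s) (tsubst \<phi> t)"
| "tsubst \<phi> (Mul s t) = Mul (tsubst \<phi> s) (tsubst \<phi> t)"

primrec gens :: "('k, 'g) aterm \<Rightarrow> 'g set" where
  "gens (Gen g) = {g}"
| "gens (Scal c) = {}"
| "gens (Add s t) = gens s \<union> gens t"
| "gens (Mul s t) = gens s \<union> gens t"

primrec tpow :: "('k::field, 'g) aterm \<Rightarrow> nat \<Rightarrow> ('k, 'g) aterm" where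
  "tpow t 0 = Scal 1"
| "tpow t (Suc k) = Mul t (tpow t k)"

text \<open>Finite sums / products of terms over a finite set (in some enumeration order;
  the order is irrelevant up to alg_eq for sums, and for products of commuting factors).\<close>
definition tsum :: "('a \<Rightarrow> ('k::field, 'g) aterm) \<Rightarrow> 'a set \<Rightarrow> ('k, 'g) aterm" where
  "tsum f S = foldr (\<lambda>x acc. Add (f x) acc) (SOME xs. distinct xs \<and> set xs = S) (Scal 0)"

definition tprod :: "('a \<Rightarrow> ('k::field, 'g) aterm) \<Rightarrow> 'a set \<Rightarrow> ('k, 'g) aterm" where
  "tprod f S = foldr (\<lambda>x acc. Mul (f x) acc) (SOME xs. distinct xs \<and> set xs = S) (Scal 1)"

definition mzero :: "'n \<Rightarrow> nat" where "mzero = (\<lambda>_. 0)"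
definition munit :: "'n \<Rightarrow> 'n \<Rightarrow> nat" where "munit p = (\<lambda>i. if i = p then 1 else 0)"
definition madd :: "('n \<Rightarrow> nat) \<Rightarrow> ('n \<Rightarrow> nat) \<Rightarrow> 'n \<Rightarrow> nat" where
  "madd a b = (\<lambda>i. a i + b i)"
definition msub :: "('n \<Rightarrow> nat) \<Rightarrow> ('n \<Rightarrow> nat) \<Rightarrow> 'n \<Rightarrow> nat" where
  "msub a b = (\<lambda>i. a i - b i)"
definition mabs :: "('n::finite \<Rightarrow> nat) \<Rightarrow> nat" where
  "mabs m = (\<Sum>i\<in>UNIV. m i)"
definition mbinom :: "('n::finite \<Rightarrow> nat) \<Rightarrow> ('n \<Rightarrow> nat) \<Rightarrow> nat" where
  "mbinom m k = (\<Prod>i\<in>UNIV. m i choose k i)"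

text \<open>Bracket of basis vector fields, with G the generator for x^a d/dx_p:
  [x^a d_p, x^b d_q] = b_p x^(a+b-e_p) d_q - a_q x^(a+b-e_q) d_p.\<close>
definition vf_bracket :: "(('n \<Rightarrow> nat) \<Rightarrow> 'n \<Rightarrow> 'g) \<Rightarrow> ('n \<Rightarrow> nat) \<Rightarrow> 'n \<Rightarrow> ('n \<Rightarrow> nat) \<Rightarrow> 'n
    \<Rightarrow> ('k::field, 'g) aterm" where
  "vf_bracket G a p b q =
     Sub (Mul (Scal (of_nat (b p))) (Gen (G (msub (madd a b) (munit p)) q)))
         (Mul (Scal (of_nat (a q))) (Gen (G (msub (madd a b) (munit q)) p)))"

text \<open>Generators: x_i, d_i (of the Weyl algebra D) and the basis x^m d/dx_p (m \<noteq> 0) of L_+.\<close>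
datatype 'n dgen = Xd 'n | Dd 'n | Lp "'n \<Rightarrow> nat" 'n

definition src_gens :: "'n dgen set" where
  "src_gens = range Xd \<union> range Dd \<union> {Lp m p | m p. m \<noteq> mzero}"

definition src_rels :: "(('k::field, 'n dgen) aterm \<times> ('k, 'n dgen) aterm) set" where
  "src_rels =
     {(comm (Gen (Xd i)) (Gen (Xd j)), Scal 0) | i j. True}
   \<union> {(comm (Gen (Dd i)) (Gen (Dd j)), Scal 0) | i j. True}
   \<union> {(comm (Gen (Dd i)) (Gen (Xd j)), Scal (if i = j then 1 else 0)) | i j. True}
   \<union> {(comm (Gen (Lp a p)) (Gen (Lp b q)), vf_bracket Lp a p b q) | a p b q.
        a \<noteq> mzero \<and> b \<noteq> mzero}
   \<union> {(comm (Gen (Lp a p)) (Gen d), Scal 0) | a p d. a \<noteq> mzero \<and> d \<in> range Xd \<union> range Dd}"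

text \<open>Generators: x^m # 1 (monomials of A) and 1 # x^a d/dx_p (basis of V).\<close>
datatype 'n sgen = XA "'n \<Rightarrow> nat" | VF "'n \<Rightarrow> nat" 'n

definition tgt_rels :: "(('k::field, 'n sgen) aterm \<times> ('k, 'n sgen) aterm) set" where
  "tgt_rels =
     {(Mul (Gen (XA a)) (Gen (XA b)), Gen (XA (madd a b))) | a b. True}
   \<union> {(Gen (XA mzero), Scal 1)}
   \<union> {(comm (Gen (VF a p)) (Gen (VF b q)), vf_bracket VF a p b q) | a p b q. True}
   \<union> {(comm (Gen (VF a p)) (Gen (XA b)),
        Mul (Scal (of_nat (b p))) (Gen (XA (msub (madd a b) (munit p))))) | a p b. True}"

definition psi :: "'n::finite dgen \<Rightarrow> ('k::field, 'n sgen) aterm" where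
  "psi g = (case g of
      Xd i \<Rightarrow> Gen (XA (munit i))
    | Dd i \<Rightarrow> Gen (VF mzero i)
    | Lp m p \<Rightarrow> tsum (\<lambda>k. Mul (Scal ((-1) ^ mabs (msub m k) * of_nat (mbinom m k)))
                             (Mul (Gen (XA (msub m k))) (Gen (VF k p))))
                     {k. \<forall>i. k i \<le> m i})"

end

theory Submission
  imports Defs "HOL-Library.FuncSet"
begin

text \<open>Write c(m,k) = (-1)^|m-k| binom(m,k), so that \<psi>(x^m \<partial>_p) = \<Sum>_k c(m,k) x^(m-k) # x^k \<partial>_p.
  It suffices to check the defining relations of D \<otimes> U(L_+) on generators, in the quotient ring
  A # U(V); the Weyl relations hold there directly. For m \<noteq> 0 the image of x^m \<partial>_p commutes
  with x_j because \<Sum>_k c(m,k) = 0, and with \<partial>_j because the two sums produced by the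
  commutator cancel after the shift k \<mapsto> k + e_j. In the commutator of the images of x^a \<partial>_p
  and x^b \<partial>_q the cross terms do not depend on one of the two summation indices and vanish for
  the same reason, while the main terms recombine, by the Vandermonde identity
  \<Sum>_(k+l=j) c(a,k) c(b,l) = c(a+b,j), into the image of [x^a \<partial>_p, x^b \<partial>_q].\<close>

section \<open>Signed binomial coefficients\<close>

definition sbinom :: "nat \<Rightarrow> nat \<Rightarrow> 'a::comm_ring_1" where
  "sbinom n k = (-1) ^ (n - k) * of_nat (n choose k)"

lemma sum_sbinom: "(\<Sum>k\<le>n. sbinom n k) = (if n = 0 then 1 else (0 :: 'a::comm_ring_1))"
  using binomial_ring[of 1 "-1 :: 'a" n] by (simp add: sbinom_def mult.commute power_0_left)

lemma sbinom_Suc_right: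
  assumes "k < n"
  shows "sbinom n (Suc k) * of_nat (Suc k) = - (sbinom n k * of_nat (n - k) :: 'a::comm_ring_1)"
proof -
  obtain n' where n: "n = Suc n'" using assms by (cases n) auto
  have "(n choose Suc k) * Suc k = (n choose k) * (n - k)"
    using Suc_times_binomial[of k n'] binomial_absorb_comp[of n k] by (simp add: n mult.commute)
  then have "of_nat (n choose Suc k) * of_nat (Suc k) = (of_nat (n choose k) * of_nat (n - k) :: 'a)"
    by (metis of_nat_mult)
  moreover have "n - k = Suc (n - Suc k)"
    using assms by simp
  ultimately show ?thesis by (simp add: sbinom_def mult.assoc)
qed

lemma sbinom_Suc_Suc:
  "sbinom (Suc n) (Suc k) * of_nat (Suc k) = (of_nat (Suc n) * sbinom n k :: 'a::comm_ring_1)"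
proof -
  have "of_nat (Suc n choose Suc k) * of_nat (Suc k) = (of_nat (Suc n) * of_nat (n choose k) :: 'a)"
    using Suc_times_binomial[of k n] by (metis mult.commute of_nat_mult)
  then show ?thesis by (simp add: sbinom_def mult.assoc del: of_nat_Suc)
qed

lemma sbinom_vandermonde:
  "(\<Sum>k\<le>j. sbinom a k * sbinom c (j - k)) = (sbinom (a + c) j :: 'a::comm_ring_1)"
proof -
  have "sbinom a k * sbinom c (j - k) = (-1) ^ (a + c - j) * (of_nat ((a choose k) * (c choose (j - k))) :: 'a)"
    if "k \<le> j" for k
  proof (cases "k \<le> a \<and> j - k \<le> c")
    case True
    then have "a - k + (c - (j - k)) = a + c - j" using that by linarith
    then show ?thesis by (simp add: sbinom_def power_add[symmetric] algebra_simps)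
  qed (auto simp: sbinom_def binomial_eq_0 not_le)
  then have "(\<Sum>k\<le>j. sbinom a k * sbinom c (j - k))
      = (-1) ^ (a + c - j) * (of_nat (\<Sum>k\<le>j. (a choose k) * (c choose (j - k))) :: 'a)"
    by (simp add: sum_distrib_left)
  then show ?thesis by (simp add: vandermonde sbinom_def)
qed

definition signed_mbinom :: "('n::finite \<Rightarrow> nat) \<Rightarrow> ('n \<Rightarrow> nat) \<Rightarrow> 'a::comm_ring_1" where
  "signed_mbinom m k = (-1) ^ mabs (msub m k) * of_nat (mbinom m k)"

lemma signed_mbinom_eq_prod: "signed_mbinom m k = (\<Prod>i\<in>UNIV. sbinom (m i) (k i))"
  by (simp add: signed_mbinom_def sbinom_def mabs_def msub_def mbinom_def power_sum prod.distrib)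

lemma mindex_atMost_eq_PiE: "{..m} = PiE UNIV (\<lambda>i. {..m i})"
  by (auto simp: PiE_UNIV_domain Pi_def le_fun_def)

lemma finite_mindex_atMost [simp]: "finite {..m :: 'n::finite \<Rightarrow> nat}"
  unfolding mindex_atMost_eq_PiE by (intro finite_PiE) auto

lemma sum_mindex_atMost_prod:
  "(\<Sum>k\<in>{..m}. \<Prod>i\<in>UNIV. f i (k i)) = (\<Prod>i\<in>UNIV. \<Sum>x\<le>m i. f i x :: 'a::comm_semiring_1)"
  for m :: "'n::finite \<Rightarrow> nat"
  unfolding mindex_atMost_eq_PiE by (rule prod_sum_PiE[symmetric]) auto

lemma sum_signed_mbinom_eq_0:
  assumes "m \<noteq> mzero"
  shows "(\<Sum>k\<in>{..m}. signed_mbinom m k) = (0 :: 'a::comm_ring_1)"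
proof -
  obtain i where "m i \<noteq> 0" using assms by (auto simp: mzero_def)
  have "(\<Sum>k\<in>{..m}. signed_mbinom m k) = (\<Prod>i\<in>UNIV. \<Sum>x\<le>m i. sbinom (m i) x :: 'a)"
    unfolding signed_mbinom_eq_prod by (rule sum_mindex_atMost_prod)
  also have "\<dots> = 0"
    using \<open>m i \<noteq> 0\<close> unfolding sum_sbinom by (intro prod_zero) auto
  finally show ?thesis .
qed

lemma signed_mbinom_eq_0:
  assumes "\<not> k \<le> m"
  shows "signed_mbinom m k = 0"
proof -
  from assms obtain i where "m i < k i" by (auto simp: le_fun_def not_le)
  then have "mbinom m k = 0" unfolding mbinom_def by (intro prod_zero) auto
  then show ?thesis by (simp add: signed_mbinom_def)
qed

lemma signed_mbinom_vandermonde: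
  "(\<Sum>k\<in>{..j}. signed_mbinom a k * signed_mbinom c (msub j k))
     = (signed_mbinom (madd a c) j :: 'a::comm_ring_1)"
proof -
  have "(\<Sum>k\<in>{..j}. signed_mbinom a k * signed_mbinom c (msub j k))
      = (\<Sum>k\<in>{..j}. \<Prod>i\<in>UNIV. sbinom (a i) (k i) * sbinom (c i) (j i - k i) :: 'a)"
    by (simp add: signed_mbinom_eq_prod msub_def prod.distrib)
  also have "\<dots> = (\<Prod>i\<in>UNIV. \<Sum>x\<le>j i. sbinom (a i) x * sbinom (c i) (j i - x))"
    by (rule sum_mindex_atMost_prod)
  finally show ?thesis by (simp add: sbinom_vandermonde signed_mbinom_eq_prod madd_def)
qed

lemma signed_mbinom_change_coordinate:
  assumes "\<And>i. i \<noteq> j \<Longrightarrow> m' i = m i \<and> k' i = k i"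
    and "sbinom (m' j) (k' j) * c = sbinom (m j) (k j) * (c' :: 'a::comm_ring_1)"
  shows "signed_mbinom m' k' * c = signed_mbinom m k * c'"
proof -
  have rest: "(\<Prod>i\<in>UNIV-{j}. sbinom (m' i) (k' i)) = (\<Prod>i\<in>UNIV-{j}. sbinom (m i) (k i) :: 'a)"
    using assms(1) by (intro prod.cong) auto
  have "signed_mbinom m' k' * c = (\<Prod>i\<in>UNIV-{j}. sbinom (m' i) (k' i)) * (sbinom (m' j) (k' j) * c)"
    by (simp add: signed_mbinom_eq_prod prod.remove[of UNIV j] algebra_simps)
  also have "\<dots> = (\<Prod>i\<in>UNIV-{j}. sbinom (m i) (k i)) * (sbinom (m j) (k j) * c')"
    by (simp only: rest assms(2))
  also have "\<dots> = signed_mbinom m k * c'"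
    by (simp add: signed_mbinom_eq_prod prod.remove[of UNIV j] algebra_simps)
  finally show ?thesis .
qed

lemma signed_mbinom_add_munit:
  assumes "k j < m j"
  shows "of_nat (Suc (k j)) * signed_mbinom m (madd k (munit j))
    = - (of_nat (m j - k j) * signed_mbinom m k :: 'a::comm_ring_1)"
proof -
  have "signed_mbinom m (madd k (munit j)) * of_nat (Suc (k j))
      = signed_mbinom m k * - (of_nat (m j - k j) :: 'a)"
    by (rule signed_mbinom_change_coordinate[where j = j])
      (use sbinom_Suc_right[OF assms] in \<open>simp_all add: madd_def munit_def\<close>)
  then show ?thesis by (simp add: mult.commute)
qed

lemma signed_mbinom_add_munit_both:
  "of_nat (Suc (l p)) * signed_mbinom (madd b (munit p)) (madd l (munit p))
    = (of_nat (Suc (b p)) * signed_mbinom b l :: 'a::comm_ring_1)"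
proof -
  have "signed_mbinom (madd b (munit p)) (madd l (munit p)) * of_nat (Suc (l p))
      = signed_mbinom b l * (of_nat (Suc (b p)) :: 'a)"
    by (rule signed_mbinom_change_coordinate[where j = p])
      (use sbinom_Suc_Suc[of "b p" "l p"] in \<open>simp_all add: madd_def munit_def mult.commute\<close>)
  then show ?thesis by (simp add: mult.commute)
qed

lemma signed_mbinom_convolution:
  "(\<Sum>k\<in>{..a}. \<Sum>l\<in>{..c}. if madd k l = j then signed_mbinom a k * signed_mbinom c l else 0)
    = (signed_mbinom (madd a c) j :: 'a::comm_ring_1)"
proof -
  have inner: "(\<Sum>l\<in>{..c}. if madd k l = j then signed_mbinom a k * signed_mbinom c l else 0)
      = (if k \<le> j then signed_mbinom a k * signed_mbinom c (msub j k) else (0 :: 'a))" for k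
  proof (cases "k \<le> j")
    case True
    then have "madd k l = j \<longleftrightarrow> msub j k = l" for l
      unfolding le_fun_def madd_def msub_def fun_eq_iff by (metis add_diff_cancel_left' le_add_diff_inverse)
    then have "(\<Sum>l\<in>{..c}. if madd k l = j then signed_mbinom a k * signed_mbinom c l else 0)
        = (\<Sum>l\<in>{..c}. if msub j k = l then signed_mbinom a k * signed_mbinom c l else (0 :: 'a))"
      by (intro sum.cong) auto
    also have "\<dots> = signed_mbinom a k * signed_mbinom c (msub j k)"
      by (auto simp: sum.delta signed_mbinom_eq_0)
    finally show ?thesis using True by simp
  next
    case False
    then have "madd k l \<noteq> j" for l
      by (auto simp: le_fun_def madd_def)
    with False show ?thesis by simp
  qed
  have "(\<Sum>k\<in>{..a}. if k \<le> j then signed_mbinom a k * signed_mbinom c (msub j k) else 0)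
      = (\<Sum>k\<in>{..j}. signed_mbinom a k * signed_mbinom c (msub j k) :: 'a)"
    by (rule sum.mono_neutral_cong) (auto simp: signed_mbinom_eq_0)
  then show ?thesis by (simp add: inner signed_mbinom_vandermonde)
qed

section \<open>The smash product A # U(V) as a quotient ring\<close>

definition commutator :: "'a::ring \<Rightarrow> 'a \<Rightarrow> 'a" where
  "commutator a b = a * b - b * a"

lemma commutator_sum_left: "commutator (\<Sum>x\<in>A. f x) b = (\<Sum>x\<in>A. commutator (f x) b)"
  by (simp add: commutator_def sum_distrib_left sum_distrib_right sum_subtractf)

lemma commutator_sum_right: "commutator a (\<Sum>x\<in>A. f x) = (\<Sum>x\<in>A. commutator a (f x))"
  by (simp add: commutator_def sum_distrib_left sum_distrib_right sum_subtractf)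

lemma commutator_swap: "commutator b a = - commutator a b"
  by (simp add: commutator_def)

lemma commutator_mult_left: "commutator (x * a) b = x * commutator a b + commutator x b * a"
  by (simp add: commutator_def algebra_simps)

lemma commutator_mult_mult:
  assumes "x * y = y * x"
  shows "commutator (x * a) (y * b) = x * y * commutator a b + commutator (x * a) y * b - commutator (y * b) x * a"
  using assms by (simp add: commutator_def algebra_simps) (metis mult.assoc)

lemma alg_eq_equivp: "equivp (alg_eq R)"
  by (intro equivpI reflpI sympI transpI) (auto intro: alg_eq.intros)

quotient_type (overloaded) ('k, 'n) smash = "('k::field, 'n sgen) aterm" / "alg_eq tgt_rels"
  by (rule alg_eq_equivp)

instantiation smash :: (field, type) "{ring, monoid_mult}"
begin

lift_definition zero_smash :: "('a, 'b) smash" is "Scal 0" .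
lift_definition one_smash :: "('a, 'b) smash" is "Scal 1" .
lift_definition plus_smash :: "('a, 'b) smash \<Rightarrow> ('a, 'b) smash \<Rightarrow> ('a, 'b) smash" is Add
  by (rule alg_eq.add_cong)
lift_definition times_smash :: "('a, 'b) smash \<Rightarrow> ('a, 'b) smash \<Rightarrow> ('a, 'b) smash" is Mul
  by (rule alg_eq.mul_cong)
lift_definition uminus_smash :: "('a, 'b) smash \<Rightarrow> ('a, 'b) smash" is Neg
  unfolding Neg_def by (intro alg_eq.mul_cong alg_eq.refl)
lift_definition minus_smash :: "('a, 'b) smash \<Rightarrow> ('a, 'b) smash \<Rightarrow> ('a, 'b) smash" is Sub
  unfolding Sub_def Neg_def by (intro alg_eq.mul_cong alg_eq.add_cong alg_eq.refl)

instance
proof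
  fix a b c :: "('a, 'b) smash"
  show "a + b + c = a + (b + c)" by transfer (rule alg_eq.add_assoc)
  show "a + b = b + a" by transfer (rule alg_eq.add_comm)
  show "0 + a = a" by transfer (rule alg_eq.add_zero)
  show "- a + a = 0" by transfer (meson alg_eq.add_comm alg_eq.add_neg alg_eq.trans)
  show "a - b = a + - b" by transfer (simp add: Sub_def alg_eq.refl)
  show "a * b * c = a * (b * c)" by transfer (rule alg_eq.mul_assoc)
  show "(a + b) * c = a * c + b * c" by transfer (rule alg_eq.distrib_r)
  show "a * (b + c) = a * b + a * c" by transfer (rule alg_eq.distrib_l)
  show "1 * a = a" by transfer (rule alg_eq.mul_one_l)
  show "a * 1 = a" by transfer (rule alg_eq.mul_one_r)
qed

end

lift_definition sc :: "'k \<Rightarrow> ('k::field, 'n) smash" is Scal .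
lift_definition X :: "('n \<Rightarrow> nat) \<Rightarrow> ('k::field, 'n) smash" is "\<lambda>m. Gen (XA m)" .
lift_definition V :: "('n \<Rightarrow> nat) \<Rightarrow> 'n \<Rightarrow> ('k::field, 'n) smash" is "\<lambda>m p. Gen (VF m p)" .

lemma abs_smash_eq_iff: "abs_smash s = abs_smash t \<longleftrightarrow> alg_eq tgt_rels s t"
  by (rule smash.abs_eq_iff)

lemma abs_smash_simps:
  "abs_smash (Add s t) = abs_smash s + abs_smash t"
  "abs_smash (Mul s t) = abs_smash s * abs_smash t"
  "abs_smash (Neg s) = - abs_smash s"
  "abs_smash (Sub s t) = abs_smash s - abs_smash t"
  "abs_smash (comm s t) = commutator (abs_smash s) (abs_smash t)"
  "abs_smash (Scal c) = sc c"
  "abs_smash (Gen (XA m)) = X m"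
  "abs_smash (Gen (VF m p)) = V m p"
  by (simp_all add: plus_smash.abs_eq times_smash.abs_eq uminus_smash.abs_eq minus_smash.abs_eq
      comm_def commutator_def sc.abs_eq X.abs_eq V.abs_eq)

lemma sc_0 [simp]: "sc 0 = 0"
  by transfer (rule alg_eq.refl)

lemma sc_1 [simp]: "sc 1 = 1"
  by transfer (rule alg_eq.refl)

lemma sc_add: "sc (x + y) = sc x + sc y"
  by transfer (rule alg_eq.sym, rule alg_eq.scal_add)

lemma sc_mult: "sc (x * y) = sc x * sc y"
  by transfer (rule alg_eq.sym, rule alg_eq.scal_mul)

lemma sc_minus: "sc (- x) = - sc x"
  by transfer (metis Neg_def alg_eq.sym alg_eq.scal_mul mult_minus1)

lemma sc_sum: "sc (sum f A) = (\<Sum>x\<in>A. sc (f x))"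
  by (induct A rule: infinite_finite_induct) (simp_all add: sc_add)

lemma sc_commute: "sc x * a = a * sc x"
  by transfer (rule alg_eq.scal_central)

lemma mult_sc_left_commute: "a * (sc x * b) = sc x * (a * b)"
  by (metis sc_commute mult.assoc)

lemma sc_mult_sc: "sc x * (sc y * a) = sc (x * y) * a"
  by (simp add: sc_mult mult.assoc)

lemma commutator_sc_left: "commutator (sc x * a) b = sc x * commutator a b"
  by (simp add: commutator_def algebra_simps mult_sc_left_commute)

lemma commutator_sc_right: "commutator a (sc x * b) = sc x * commutator a b"
  by (simp add: commutator_def algebra_simps mult_sc_left_commute)

lemma abs_smash_tgt_rel: "(s, t) \<in> tgt_rels \<Longrightarrow> abs_smash s = abs_smash t"
  by (simp add: abs_smash_eq_iff alg_eq.rel)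

lemma X_mult_X: "X a * X b = X (madd a b)"
  using abs_smash_tgt_rel[of "Mul (Gen (XA a)) (Gen (XA b))" "Gen (XA (madd a b))"]
  by (simp add: tgt_rels_def abs_smash_simps)

lemma X_mzero: "X mzero = 1"
  using abs_smash_tgt_rel[of "Gen (XA mzero)" "Scal 1"] by (simp add: tgt_rels_def abs_smash_simps)

lemma X_commute: "X a * X b = X b * X a"
  by (simp add: X_mult_X madd_def add.commute)

lemma commutator_X_X: "commutator (X a) (X b) = 0"
  by (simp add: commutator_def X_commute)

lemma commutator_V_V:
  "commutator (V a p) (V b q :: ('k::field, 'n) smash)
    = sc (of_nat (b p)) * V (msub (madd a b) (munit p)) q - sc (of_nat (a q)) * V (msub (madd a b) (munit q)) p"
proof -
  have "(comm (Gen (VF a p)) (Gen (VF b q)), vf_bracket VF a p b q) \<in> (tgt_rels :: (('k, 'n sgen) aterm \<times> _) set)"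
    unfolding tgt_rels_def by blast
  from abs_smash_tgt_rel[OF this] show ?thesis by (simp add: abs_smash_simps vf_bracket_def)
qed

lemma commutator_V_X:
  "commutator (V a p) (X b :: ('k::field, 'n) smash) = sc (of_nat (b p)) * X (msub (madd a b) (munit p))"
proof -
  have "(comm (Gen (VF a p)) (Gen (XA b)), Mul (Scal (of_nat (b p))) (Gen (XA (msub (madd a b) (munit p)))))
      \<in> (tgt_rels :: (('k, 'n sgen) aterm \<times> _) set)"
    unfolding tgt_rels_def by blast
  from abs_smash_tgt_rel[OF this] show ?thesis by (simp add: abs_smash_simps)
qed

section \<open>The images of the vector fields x^m \<partial>_p\<close>

lemma msub_apply: "msub a b i = a i - b i"
  by (simp add: msub_def)

lemma msub_madd_cancel: "msub (madd k l) l = k"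
  by (simp add: madd_def msub_def)

lemma msub_msub: "msub (msub m k) l = msub m (madd k l)"
  by (simp add: madd_def msub_def fun_eq_iff)

lemma sum_mindex_shift:
  "(\<Sum>k\<in>{k\<in>{..m}. 0 < k j}. f k) = (\<Sum>k\<in>{k\<in>{..m}. k j < m j}. f (madd k (munit j)))"
  by (rule sum.reindex_bij_witness[symmetric, of _ "\<lambda>k. msub k (munit j)" "\<lambda>k. madd k (munit j)"])
    (auto simp: le_fun_def madd_def msub_def munit_def fun_eq_iff Suc_le_eq split: if_splits
      dest: spec[where x = j])

lemma sum_signed_mbinom_shift:
  fixes G :: "('n::finite \<Rightarrow> nat) \<Rightarrow> ('k::field, 'n) smash"
  shows "(\<Sum>k\<in>{..m}. sc (of_nat (k j) * signed_mbinom m k) * G k)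
    = - (\<Sum>k\<in>{..m}. sc (of_nat (m j - k j) * signed_mbinom m k) * G (madd k (munit j)))"
proof -
  let ?f = "\<lambda>k. sc (of_nat (m j - k j) * signed_mbinom m k) * G (madd k (munit j))"
  have "(\<Sum>k\<in>{..m}. sc (of_nat (k j) * signed_mbinom m k) * G k)
      = (\<Sum>k\<in>{k\<in>{..m}. 0 < k j}. sc (of_nat (k j) * signed_mbinom m k) * G k)"
    by (rule sum.mono_neutral_right) auto
  also have "\<dots> = (\<Sum>k\<in>{k\<in>{..m}. k j < m j}.
      sc (of_nat (Suc (k j)) * signed_mbinom m (madd k (munit j))) * G (madd k (munit j)))"
    unfolding sum_mindex_shift by (simp add: madd_def munit_def)
  also have "\<dots> = (\<Sum>k\<in>{k\<in>{..m}. k j < m j}. - ?f k)"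
  proof (rule sum.cong[OF HOL.refl])
    fix k assume "k \<in> {k\<in>{..m}. k j < m j}"
    then have "of_nat (Suc (k j)) * signed_mbinom m (madd k (munit j))
        = - (of_nat (m j - k j) * signed_mbinom m k :: 'k)"
      by (intro signed_mbinom_add_munit) simp
    then show "sc (of_nat (Suc (k j)) * signed_mbinom m (madd k (munit j))) * G (madd k (munit j)) = - ?f k"
      by (simp only: sc_minus mult_minus_left)
  qed
  also have "\<dots> = - (\<Sum>k\<in>{k\<in>{..m}. k j < m j}. ?f k)"
    by (simp add: sum_negf)
  also have "(\<Sum>k\<in>{k\<in>{..m}. k j < m j}. ?f k) = (\<Sum>k\<in>{..m}. ?f k)"
  proof (rule sum.mono_neutral_left)
    show "\<forall>k\<in>{..m} - {k\<in>{..m}. k j < m j}. ?f k = 0"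
    proof
      fix k assume "k \<in> {..m} - {k\<in>{..m}. k j < m j}"
      then have "m j - k j = 0" by auto
      then show "?f k = 0" by simp
    qed
  qed auto
  finally show ?thesis .
qed

lemma sum_signed_mbinom_lower:
  fixes G :: "('n::finite \<Rightarrow> nat) \<Rightarrow> ('k::field, 'n) smash"
  shows "(\<Sum>l\<in>{..b}. sc (of_nat (l p) * signed_mbinom b l) * G l)
    = sc (of_nat (b p)) * (\<Sum>l\<in>{..msub b (munit p)}. sc (signed_mbinom (msub b (munit p)) l) * G (madd l (munit p)))"
proof (cases "b p = 0")
  case True
  have "sc (of_nat (l p) * signed_mbinom b l) * G l = 0" if "l \<le> b" for l
  proof -
    have "l p = 0" using that True by (auto simp: le_fun_def dest: spec[where x = p])
    then show ?thesis by simp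
  qed
  then have "(\<Sum>l\<in>{..b}. sc (of_nat (l p) * signed_mbinom b l) * G l) = 0"
    by (intro sum.neutral) auto
  with True show ?thesis by simp
next
  case False
  define b' where "b' = msub b (munit p)"
  have b: "b = madd b' (munit p)"
    using False by (auto simp: b'_def madd_def msub_def munit_def fun_eq_iff)
  have box: "{l\<in>{..b}. l p < b p} = {..b'}"
    by (auto simp: b le_fun_def madd_def munit_def less_Suc_eq_le split: if_splits) (metis le_SucI)
  have "(\<Sum>l\<in>{..b}. sc (of_nat (l p) * signed_mbinom b l) * G l)
      = (\<Sum>l\<in>{l\<in>{..b}. 0 < l p}. sc (of_nat (l p) * signed_mbinom b l) * G l)"
    by (rule sum.mono_neutral_right) auto
  also have "\<dots> = (\<Sum>l\<in>{..b'}.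
      sc (of_nat (Suc (l p)) * signed_mbinom b (madd l (munit p))) * G (madd l (munit p)))"
    unfolding sum_mindex_shift box by (simp add: madd_def munit_def)
  also have "\<dots> = (\<Sum>l\<in>{..b'}. sc (of_nat (b p)) * (sc (signed_mbinom b' l) * G (madd l (munit p))))"
    unfolding b signed_mbinom_add_munit_both by (simp add: madd_def munit_def sc_mult mult.assoc)
  finally show ?thesis by (simp add: b'_def sum_distrib_left)
qed

lemma sum_signed_mbinom_convolution:
  fixes G :: "('n::finite \<Rightarrow> nat) \<Rightarrow> ('k::field, 'n) smash"
  shows "(\<Sum>k\<in>{..a}. \<Sum>l\<in>{..c}. sc (signed_mbinom a k * signed_mbinom c l) * G (madd k l))
    = (\<Sum>j\<in>{..madd a c}. sc (signed_mbinom (madd a c) j) * G j)"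
proof -
  let ?c = "\<lambda>k l j. if madd k l = j then signed_mbinom a k * signed_mbinom c l else 0"
  have "sc (signed_mbinom a k * signed_mbinom c l) * G (madd k l) = (\<Sum>j\<in>{..madd a c}. sc (?c k l j) * G j)"
    if "k \<le> a" "l \<le> c" for k l
  proof -
    have "madd k l \<le> madd a c" using that by (auto simp: le_fun_def madd_def add_mono)
    then show ?thesis by (simp add: if_distrib[of sc] if_distrib[of "\<lambda>x. x * _"] sum.delta' cong: if_cong)
  qed
  then have "(\<Sum>k\<in>{..a}. \<Sum>l\<in>{..c}. sc (signed_mbinom a k * signed_mbinom c l) * G (madd k l))
      = (\<Sum>k\<in>{..a}. \<Sum>l\<in>{..c}. \<Sum>j\<in>{..madd a c}. sc (?c k l j) * G j)"
    by (intro sum.cong) auto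
  also have "\<dots> = (\<Sum>j\<in>{..madd a c}. sc (\<Sum>k\<in>{..a}. \<Sum>l\<in>{..c}. ?c k l j) * G j)"
    by (simp add: sc_sum sum_distrib_right sum.swap[of _ "{..madd a c}"])
  finally show ?thesis by (simp only: signed_mbinom_convolution)
qed

definition Psi :: "('n::finite \<Rightarrow> nat) \<Rightarrow> 'n \<Rightarrow> ('k::field, 'n) smash" where
  "Psi m p = (\<Sum>k\<in>{..m}. sc (signed_mbinom m k) * (X (msub m k) * V k p))"

lemma madd_msub_msub:
  "k \<le> a \<Longrightarrow> l \<le> b \<Longrightarrow> madd (msub a k) (msub b l) = msub (madd a b) (madd k l)"
  by (auto simp: le_fun_def madd_def msub_def fun_eq_iff)

lemma commutator_XV_X:
  assumes "k \<le> a"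
  shows "commutator (X (msub a k) * V k p) (X w)
    = sc (of_nat (w p)) * (X (msub (madd a w) (munit p)) :: ('k::field, 'n) smash)"
proof -
  have "commutator (X (msub a k) * V k p) (X w)
      = sc (of_nat (w p)) * (X (madd (msub a k) (msub (madd k w) (munit p))) :: ('k, 'n) smash)"
    by (simp add: commutator_mult_left commutator_X_X commutator_V_X mult_sc_left_commute X_mult_X)
  also have "\<dots> = sc (of_nat (w p)) * X (msub (madd a w) (munit p))"
  proof (cases "w p = 0")
    case False
    with assms have "madd (msub a k) (msub (madd k w) (munit p)) = msub (madd a w) (munit p)"
      by (auto simp: le_fun_def madd_def msub_def munit_def fun_eq_iff dest!: spec)
    then show ?thesis by simp
  qed simp
  finally show ?thesis .
qed

lemma commutator_XV_V0:
  "commutator (X u * V k p) (V mzero j)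
    = - (sc (of_nat (k j)) * (X u * V (msub k (munit j)) p)
         + sc (of_nat (u j)) * (X (msub u (munit j)) * V k p) :: ('k::field, 'n) smash)"
proof -
  have "commutator (V k p) (V mzero j) = - (sc (of_nat (k j)) * V (msub k (munit j)) p :: ('k, 'n) smash)"
    by (simp add: commutator_V_V mzero_def madd_def)
  moreover have "commutator (X u) (V mzero j) = - (sc (of_nat (u j)) * X (msub u (munit j)) :: ('k, 'n) smash)"
    by (simp add: commutator_swap[of "X u"] commutator_V_X mzero_def madd_def)
  ultimately show ?thesis
    by (simp add: commutator_mult_left mult_sc_left_commute mult.assoc)
qed

lemma commutator_XV_XV:
  assumes "k \<le> a" "l \<le> b"
  shows "commutator (X (msub a k) * V k p) (X (msub b l) * V l q)
    = sc (of_nat (l p)) * (X (msub (madd a b) (madd k l)) * V (msub (madd k l) (munit p)) q)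
      - sc (of_nat (k q)) * (X (msub (madd a b) (madd k l)) * V (msub (madd k l) (munit q)) p)
      + sc (of_nat (msub b l p)) * (X (msub (madd a (msub b l)) (munit p)) * V l q)
      - sc (of_nat (msub a k q)) * (X (msub (madd b (msub a k)) (munit q)) * (V k p :: ('k::field, 'n) smash))"
  using commutator_mult_mult[OF X_commute, of "msub a k" "V k p" "msub b l" "V l q"]
  by (simp add: commutator_V_V commutator_XV_X assms X_mult_X madd_msub_msub algebra_simps
      mult_sc_left_commute)

lemma sum_sc_signed_mbinom_eq_0:
  "m \<noteq> mzero \<Longrightarrow> (\<Sum>k\<in>{..m}. sc (signed_mbinom m k)) = (0 :: ('k::field, 'n::finite) smash)"
  by (simp add: sum_signed_mbinom_eq_0 flip: sc_sum)

lemma sum_sum_signed_mbinom_indep_eq_0: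
  assumes "a \<noteq> mzero"
  shows "(\<Sum>k\<in>{..a}. \<Sum>l\<in>{..b}. sc (signed_mbinom a k * signed_mbinom b l) * F l)
    = (0 :: ('k::field, 'n::finite) smash)"
proof -
  have "(\<Sum>k\<in>{..a}. \<Sum>l\<in>{..b}. sc (signed_mbinom a k * signed_mbinom b l) * F l)
      = (\<Sum>k\<in>{..a}. sc (signed_mbinom a k) * (\<Sum>l\<in>{..b}. sc (signed_mbinom b l) * F l))"
    by (simp add: sum_distrib_left sc_mult mult.assoc)
  also have "\<dots> = (\<Sum>k\<in>{..a}. sc (signed_mbinom a k)) * (\<Sum>l\<in>{..b}. sc (signed_mbinom b l) * F l)"
    by (rule sum_distrib_right[symmetric])
  finally show ?thesis by (simp add: sum_sc_signed_mbinom_eq_0 assms)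
qed

lemma commutator_Psi_X:
  assumes "m \<noteq> mzero"
  shows "commutator (Psi m p) (X (munit j)) = (0 :: ('k::field, 'n::finite) smash)"
proof -
  have "commutator (Psi m p) (X (munit j))
      = (\<Sum>k\<in>{..m}. sc (signed_mbinom m k) * commutator (X (msub m k) * V k p) (X (munit j)))"
    by (simp add: Psi_def commutator_sum_left commutator_sc_left)
  also have "\<dots> = (\<Sum>k\<in>{..m}. sc (signed_mbinom m k))
      * (sc (of_nat (munit j p)) * (X (msub (madd m (munit j)) (munit p)) :: ('k, 'n) smash))"
    by (simp add: commutator_XV_X sum_distrib_right)
  finally show ?thesis by (simp add: sum_sc_signed_mbinom_eq_0 assms)
qed

lemma commutator_Psi_V0: "commutator (Psi m p) (V mzero j) = (0 :: ('k::field, 'n::finite) smash)"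
proof -
  define G :: "('n \<Rightarrow> nat) \<Rightarrow> ('k, 'n) smash" where "G k = X (msub m k) * V (msub k (munit j)) p" for k
  have "commutator (Psi m p) (V mzero j)
      = (\<Sum>k\<in>{..m}. sc (signed_mbinom m k) * commutator (X (msub m k) * V k p) (V mzero j))"
    by (simp add: Psi_def commutator_sum_left commutator_sc_left)
  also have "\<dots> = - ((\<Sum>k\<in>{..m}. sc (of_nat (k j) * signed_mbinom m k) * G k)
         + (\<Sum>k\<in>{..m}. sc (of_nat (m j - k j) * signed_mbinom m k) * G (madd k (munit j))))"
    by (simp add: commutator_XV_V0 G_def msub_apply msub_msub msub_madd_cancel sum.distrib sum_negf
        distrib_left sc_mult_sc mult.commute flip: minus_add_distrib)
  finally show ?thesis by (simp add: sum_signed_mbinom_shift)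
qed

lemma sum_Psi_bracket:
  "(\<Sum>k\<in>{..a}. \<Sum>l\<in>{..b}. sc (signed_mbinom a k * signed_mbinom b l)
      * (sc (of_nat (l p)) * (X (msub (madd a b) (madd k l)) * V (msub (madd k l) (munit p)) q)))
    = sc (of_nat (b p)) * (Psi (msub (madd a b) (munit p)) q :: ('k::field, 'n::finite) smash)"
proof -
  let ?T = "\<lambda>k l. X (msub (madd a b) (madd k l)) * V (msub (madd k l) (munit p)) q :: ('k, 'n) smash"
  define b' where "b' = msub b (munit p)"
  define G :: "('n \<Rightarrow> nat) \<Rightarrow> ('k, 'n) smash"
    where "G j = X (msub (msub (madd a b) (munit p)) j) * V j q" for j
  have G_shift: "?T k (madd l (munit p)) = G (madd k l)" for k l
    by (simp add: G_def madd_def msub_def munit_def diff_diff_add add_ac)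
  have inner: "(\<Sum>l\<in>{..b}. sc (signed_mbinom a k * signed_mbinom b l) * (sc (of_nat (l p)) * ?T k l))
    = sc (of_nat (b p)) * (\<Sum>l\<in>{..b'}. sc (signed_mbinom a k * signed_mbinom b' l) * G (madd k l))" for k
  proof -
    have "(\<Sum>l\<in>{..b}. sc (signed_mbinom a k * signed_mbinom b l) * (sc (of_nat (l p)) * ?T k l))
      = (\<Sum>l\<in>{..b}. sc (of_nat (l p) * signed_mbinom b l) * (sc (signed_mbinom a k) * ?T k l))"
      by (simp add: sc_mult_sc mult_ac)
    also have "\<dots> = sc (of_nat (b p))
        * (\<Sum>l\<in>{..b'}. sc (signed_mbinom b' l) * (sc (signed_mbinom a k) * G (madd k l)))"
      unfolding sum_signed_mbinom_lower b'_def G_shift ..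
    finally show ?thesis by (simp add: sc_mult_sc mult_ac)
  qed
  have "(\<Sum>k\<in>{..a}. \<Sum>l\<in>{..b}. sc (signed_mbinom a k * signed_mbinom b l) * (sc (of_nat (l p)) * ?T k l))
    = sc (of_nat (b p)) * (\<Sum>j\<in>{..madd a b'}. sc (signed_mbinom (madd a b') j) * G j)"
    by (simp add: inner sum_signed_mbinom_convolution flip: sum_distrib_left)
  also have "\<dots> = sc (of_nat (b p)) * Psi (msub (madd a b) (munit p)) q"
  proof (cases "b p = 0")
    case False
    then have "madd a b' = msub (madd a b) (munit p)"
      by (auto simp: b'_def madd_def msub_def munit_def fun_eq_iff)
    then show ?thesis by (simp add: Psi_def G_def)
  qed simp
  finally show ?thesis .
qed

lemma commutator_Psi_Psi:
  assumes "a \<noteq> mzero" "b \<noteq> mzero"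
  shows "commutator (Psi a p) (Psi b q)
    = sc (of_nat (b p)) * Psi (msub (madd a b) (munit p)) q
      - sc (of_nat (a q)) * (Psi (msub (madd a b) (munit q)) p :: ('k::field, 'n::finite) smash)"
proof -
  let ?c = "\<lambda>k l. sc (signed_mbinom a k * signed_mbinom b l) :: ('k, 'n) smash"
  define P :: "_ \<Rightarrow> _ \<Rightarrow> ('k, 'n) smash"
    where "P k l = sc (of_nat (l p)) * (X (msub (madd a b) (madd k l)) * V (msub (madd k l) (munit p)) q)" for k l
  define Q :: "_ \<Rightarrow> _ \<Rightarrow> ('k, 'n) smash"
    where "Q k l = sc (of_nat (k q)) * (X (msub (madd a b) (madd k l)) * V (msub (madd k l) (munit q)) p)" for k l
  define R :: "_ \<Rightarrow> ('k, 'n) smash"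
    where "R l = sc (of_nat (msub b l p)) * (X (msub (madd a (msub b l)) (munit p)) * V l q)" for l
  define R' :: "_ \<Rightarrow> ('k, 'n) smash"
    where "R' k = sc (of_nat (msub a k q)) * (X (msub (madd b (msub a k)) (munit q)) * V k p)" for k
  have "commutator (Psi a p) (Psi b q)
      = (\<Sum>k\<in>{..a}. \<Sum>l\<in>{..b}. ?c k l * commutator (X (msub a k) * V k p) (X (msub b l) * V l q))"
    unfolding Psi_def commutator_sum_left
    by (simp add: commutator_sum_right commutator_sc_left commutator_sc_right sum_distrib_left sc_mult_sc
        mult.commute)
  also have "\<dots> = (\<Sum>k\<in>{..a}. \<Sum>l\<in>{..b}. ?c k l * P k l)
      - (\<Sum>k\<in>{..a}. \<Sum>l\<in>{..b}. ?c k l * Q k l)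
      + (\<Sum>k\<in>{..a}. \<Sum>l\<in>{..b}. ?c k l * R l)
      - (\<Sum>k\<in>{..a}. \<Sum>l\<in>{..b}. ?c k l * R' k)"
    by (simp add: commutator_XV_XV P_def Q_def R_def R'_def distrib_left right_diff_distrib
        sum.distrib sum_subtractf)
  also have "(\<Sum>k\<in>{..a}. \<Sum>l\<in>{..b}. ?c k l * P k l) = sc (of_nat (b p)) * Psi (msub (madd a b) (munit p)) q"
    unfolding P_def by (rule sum_Psi_bracket)
  also have "(\<Sum>k\<in>{..a}. \<Sum>l\<in>{..b}. ?c k l * Q k l) = sc (of_nat (a q)) * Psi (msub (madd a b) (munit q)) p"
    using sum_Psi_bracket[of b a q p] unfolding Q_def
    by (subst sum.swap) (simp add: madd_def add.commute mult.commute)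
  also have "(\<Sum>k\<in>{..a}. \<Sum>l\<in>{..b}. ?c k l * R l) = 0"
    using assms(1) by (rule sum_sum_signed_mbinom_indep_eq_0)
  also have "(\<Sum>k\<in>{..a}. \<Sum>l\<in>{..b}. ?c k l * R' k) = 0"
    using sum_sum_signed_mbinom_indep_eq_0[OF assms(2), of a R'] by (subst sum.swap) (simp add: mult.commute)
  finally show ?thesis by simp
qed

section \<open>Compatibility with the defining relations\<close>

lemma tsubst_Neg: "tsubst \<phi> (Neg a) = Neg (tsubst \<phi> a)"
  by (simp add: Neg_def)

lemma tsubst_Sub: "tsubst \<phi> (Sub a b) = Sub (tsubst \<phi> a) (tsubst \<phi> b)"
  by (simp add: Sub_def tsubst_Neg)

lemma tsubst_comm: "tsubst \<phi> (comm a b) = comm (tsubst \<phi> a) (tsubst \<phi> b)"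
  by (simp add: comm_def tsubst_Sub)

lemma tsubst_tpow: "tsubst \<phi> (tpow t k) = tpow (tsubst \<phi> t) k"
  by (induct k) simp_all

lemma tsubst_tprod: "tsubst \<phi> (tprod f S) = tprod (\<lambda>x. tsubst \<phi> (f x)) S"
proof -
  have "tsubst \<phi> (foldr (\<lambda>x acc. Mul (f x) acc) xs (Scal 1))
      = foldr (\<lambda>x acc. Mul (tsubst \<phi> (f x)) acc) xs (Scal 1)" for xs
    by (induct xs) simp_all
  then show ?thesis by (simp add: tprod_def)
qed

lemma some_distinct_list:
  assumes "finite S"
  shows "distinct (SOME xs. distinct xs \<and> set xs = S) \<and> set (SOME xs. distinct xs \<and> set xs = S) = S"
proof -
  obtain xs where "distinct xs \<and> set xs = S" using finite_distinct_list[OF assms] by blast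
  then show ?thesis by (rule someI)
qed

lemma abs_smash_tsum:
  assumes "finite S"
  shows "abs_smash (tsum f S) = (\<Sum>x\<in>S. abs_smash (f x))"
proof -
  define xs where "xs = (SOME xs. distinct xs \<and> set xs = S)"
  have "abs_smash (foldr (\<lambda>x acc. Add (f x) acc) ys (Scal 0)) = (\<Sum>x\<leftarrow>ys. abs_smash (f x))" for ys
    by (induct ys) (simp_all add: abs_smash_simps)
  then have "abs_smash (tsum f S) = (\<Sum>x\<leftarrow>xs. abs_smash (f x))"
    by (simp add: tsum_def xs_def)
  also have "\<dots> = (\<Sum>x\<in>S. abs_smash (f x))"
  proof -
    have "distinct xs" "set xs = S" using some_distinct_list[OF assms] by (simp_all add: xs_def)
    then show ?thesis by (metis sum.distinct_set_conv_list)
  qed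
  finally show ?thesis .
qed

lemma abs_smash_tpow: "abs_smash (tpow t k) = abs_smash t ^ k"
  by (induct k) (simp_all add: abs_smash_simps)

lemma abs_smash_psi:
  "abs_smash (psi (Xd i)) = X (munit i)"
  "abs_smash (psi (Dd i)) = V mzero i"
  "abs_smash (psi (Lp m p)) = (Psi m p :: ('k::field, 'n::finite) smash)"
proof -
  have "{k. \<forall>i. k i \<le> m i} = {..m}" by (auto simp: le_fun_def)
  then show "abs_smash (psi (Lp m p)) = (Psi m p :: ('k::field, 'n::finite) smash)"
    by (simp add: psi_def abs_smash_simps abs_smash_tsum Psi_def signed_mbinom_def)
qed (simp_all add: psi_def abs_smash_simps)

lemma commutator_V0_V0: "commutator (V mzero i) (V mzero j) = (0 :: ('k::field, 'n) smash)"
  by (simp add: commutator_V_V mzero_def)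

lemma commutator_V0_X_munit:
  "commutator (V mzero i) (X (munit j)) = (sc (if i = j then 1 else 0) :: ('k::field, 'n) smash)"
proof (cases "i = j")
  case True
  then have "msub (madd mzero (munit j)) (munit i) = mzero"
    by (auto simp: madd_def msub_def munit_def mzero_def)
  with True show ?thesis by (simp add: commutator_V_X munit_def X_mzero)
qed (simp add: commutator_V_X munit_def)

lemma abs_smash_tsubst_psi_src_rel:
  assumes "(s, t) \<in> (src_rels :: (('k::field, 'n::finite dgen) aterm \<times> _) set)"
  shows "abs_smash (tsubst psi s) = (abs_smash (tsubst psi t) :: ('k, 'n) smash)"
  using assms unfolding src_rels_def
proof (elim UnE CollectE exE conjE)
  fix i j assume "(s, t) = (comm (Gen (Xd i)) (Gen (Xd j)), Scal 0)"
  then show ?thesis by (simp add: tsubst_comm abs_smash_simps abs_smash_psi commutator_X_X)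
next
  fix i j assume "(s, t) = (comm (Gen (Dd i)) (Gen (Dd j)), Scal 0)"
  then show ?thesis by (simp add: tsubst_comm abs_smash_simps abs_smash_psi commutator_V0_V0)
next
  fix i j assume "(s, t) = (comm (Gen (Dd i)) (Gen (Xd j)), Scal (if i = j then 1 else 0))"
  then show ?thesis by (simp add: tsubst_comm abs_smash_simps abs_smash_psi commutator_V0_X_munit)
next
  fix a p b q assume "(s, t) = (comm (Gen (Lp a p)) (Gen (Lp b q)), vf_bracket Lp a p b q)"
    and "a \<noteq> mzero" "b \<noteq> mzero"
  then show ?thesis
    by (simp add: tsubst_comm tsubst_Sub vf_bracket_def abs_smash_simps abs_smash_psi commutator_Psi_Psi)
next
  fix a p d assume "(s, t) = (comm (Gen (Lp a p)) (Gen d), Scal 0)" "a \<noteq> mzero" "d \<in> range Xd"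
  then show ?thesis by (auto simp: tsubst_comm abs_smash_simps abs_smash_psi commutator_Psi_X)
next
  fix a p d assume "(s, t) = (comm (Gen (Lp a p)) (Gen d), Scal 0)" "d \<in> range Dd"
  then show ?thesis by (auto simp: tsubst_comm abs_smash_simps abs_smash_psi commutator_Psi_V0)
qed

lemma alg_eq_tsubst_psi:
  assumes "alg_eq (src_rels :: (('k::field, 'n::finite dgen) aterm \<times> _) set) s t"
  shows "alg_eq (tgt_rels :: (('k, 'n sgen) aterm \<times> _) set) (tsubst psi s) (tsubst psi t)"
proof -
  from assms have "abs_smash (tsubst psi s) = (abs_smash (tsubst psi t) :: ('k, 'n) smash)"
  proof (induction rule: alg_eq.induct)
    case (rel s t)
    then show ?case by (rule abs_smash_tsubst_psi_src_rel)
  next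
    case (scal_central x a)
    then show ?case by (simp only: tsubst.simps abs_smash_simps sc_commute)
  qed (simp_all add: abs_smash_simps tsubst_Neg sc_add sc_mult algebra_simps)
  then show ?thesis by (simp add: abs_smash_eq_iff)
qed

lemma X_munit_power: "X (munit i) ^ k = (X (\<lambda>j. if j = i then k else 0) :: ('k::field, 'n) smash)"
proof (induct k)
  case 0
  then show ?case by (simp add: X_mzero[unfolded mzero_def])
next
  case (Suc k)
  moreover have "madd (munit i) (\<lambda>j. if j = i then k else 0) = (\<lambda>j. if j = i then Suc k else 0)"
    by (auto simp: madd_def munit_def)
  ultimately show ?case by (simp add: X_mult_X)
qed

lemma abs_smash_tprod_X_munit_power:
  "abs_smash (tprod (\<lambda>i. tpow (Gen (XA (munit i))) (r i)) UNIV) = (X r :: ('k::field, 'n::finite) smash)"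
proof -
  define xs where "xs = (SOME xs. distinct xs \<and> set xs = (UNIV :: 'n set))"
  have "distinct ys \<Longrightarrow> abs_smash (foldr (\<lambda>i acc. Mul (tpow (Gen (XA (munit i))) (r i)) acc) ys (Scal 1))
      = (X (\<lambda>j. if j \<in> set ys then r j else 0) :: ('k, 'n) smash)" for ys
  proof (induct ys)
    case Nil
    then show ?case by (simp add: abs_smash_simps X_mzero[unfolded mzero_def])
  next
    case (Cons i ys)
    moreover have "madd (\<lambda>j. if j = i then r i else 0) (\<lambda>j. if j \<in> set ys then r j else 0)
        = (\<lambda>j. if j \<in> set (i # ys) then r j else 0)"
      using Cons.prems by (auto simp: madd_def)
    ultimately show ?case by (simp add: abs_smash_simps abs_smash_tpow X_munit_power X_mult_X)
  qed
  moreover have "distinct xs" "set xs = UNIV" using some_distinct_list[of "UNIV :: 'n set"] by (simp_all add: xs_def)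
  ultimately show ?thesis by (simp add: tprod_def flip: xs_def)
qed

lemma alg_eq_tsubst_psi_ordered_monomial:
  "alg_eq (tgt_rels :: (('k::field, 'n::finite sgen) aterm \<times> _) set)
     (tsubst psi (Mul (tprod (\<lambda>i. tpow (Gen (Xd i)) (r i)) UNIV)
                      (tprod (\<lambda>i. tpow (Gen (Dd i)) (s i)) UNIV)))
     (Mul (Gen (XA r)) (tprod (\<lambda>i. tpow (Gen (VF mzero i)) (s i)) UNIV))"
proof -
  have "tsubst psi (tprod (\<lambda>i. tpow (Gen (Dd i)) (s i)) UNIV)
      = (tprod (\<lambda>i. tpow (Gen (VF mzero i)) (s i)) UNIV :: ('k, 'n sgen) aterm)"
    by (simp add: tsubst_tprod tsubst_tpow psi_def)
  moreover have "tsubst psi (tprod (\<lambda>i. tpow (Gen (Xd i)) (r i)) UNIV)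
      = (tprod (\<lambda>i. tpow (Gen (XA (munit i))) (r i)) UNIV :: ('k, 'n sgen) aterm)"
    by (simp add: tsubst_tprod tsubst_tpow psi_def)
  ultimately show ?thesis
    by (simp add: abs_smash_eq_iff[symmetric] abs_smash_simps abs_smash_tprod_X_munit_power)
qed

theorem lemma3p4:
  assumes alg_closed: "\<forall>f :: 'k::field_char_0 poly. 0 < degree f \<longrightarrow> (\<exists>z. poly f z = 0)"
  shows "(\<forall>s t. gens s \<subseteq> (src_gens :: 'n::finite dgen set) \<and> gens t \<subseteq> src_gens
              \<and> alg_eq (src_rels :: (('k, 'n dgen) aterm \<times> _) set) s t
           \<longrightarrow> alg_eq (tgt_rels :: (('k, 'n sgen) aterm \<times> _) set) (tsubst psi s) (tsubst psi t))
       \<and> (\<forall>r s :: 'n \<Rightarrow> nat.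
           alg_eq (tgt_rels :: (('k, 'n sgen) aterm \<times> _) set)
             (tsubst psi (Mul (tprod (\<lambda>i. tpow (Gen (Xd i)) (r i)) UNIV)
                              (tprod (\<lambda>i. tpow (Gen (Dd i)) (s i)) UNIV)))
             (Mul (Gen (XA r)) (tprod (\<lambda>i. tpow (Gen (VF mzero i)) (s i)) UNIV)))"
  using alg_eq_tsubst_psi alg_eq_tsubst_psi_ordered_monomial by blast

end
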